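(* Fix parameters $\tau\in(0,1/100)$ and $M\ge2$, and let $\theta=2+\tau$. Let $G$ be a non-trivial and structured GCD graph with set of primes $\mathcal{P}$ such that \[ \mathcal{R}(G)\subseteq\{p> C_6\} \quad\text{and}\quad \mathcal{R}_+(G)\neq\emptyset. \] Then there is a denominator-exact GCD subgraph $G'$ of $G$ with multiplicative data $(\mathcal{P}',f',g')$ such that: (a) $G'$ is non-trivial and maximal; (b) $\mathcal{P}\subsetneq\mathcal{P}'\subseteq \mathcal{P}\cup \mathcal{R}_+(G)$, $\mathcal{R}_+(G')\subsetneq \mathcal{R}_+(G)$, and $\mathcal{R}_-(G')\subseteq \mathcal{R}_-(G)$; (c) $f'(p)\ge0$ and $g'(p)\ge0$ for all $p\in\mathcal{P}'\setminus\mathcal{P}$; (d) $q(G')\geqslant q(G)\prod_{p\in\mathcal{P}'\setminus\mathcal{P}} (1-\mathbbm{1}_{f'(p)=g'(p)>0}/p)^2 (1-1/p^{1+\frac{\tau}{4}})$.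
   Context: For a prime $p$, $k\in\mathbb{Z}$ and $\rho\in\mathbb{Q}_{>0}$, write $\operatorname{e}_p(\rho)=k$ if $\rho=p^ka/q$ with $a,q\in\mathbb{N}$, $p\nmid aq$. For real $t$, $t^+=\max\{t,0\}$, $t^-=\max\{-t,0\}$. Weighted bipartite graph: $(\mu,\mathcal{V},\mathcal{W},\mathcal{E})$ with $\mu:\mathbb{R}_{>0}\to\mathbb{R}_{>0}$, $\mathcal{V},\mathcal{W}$ finite sets of positive reals, $\mathcal{E}\subseteq\mathcal{V}\times\mathcal{W}$; $\mu(\mathcal{T})=\sum_{t\in\mathcal{T}}\mu(t)$, $\mu(\mathcal{E})=\sum_{(v,w)\in\mathcal{E}}\mu(v)\mu(w)$; edge density $\delta=\mu(\mathcal{E})/(\mu(\mathcal{V})\mu(\mathcal{W}))$ if $\mathcal{E}\neq\emptyset$, else $0$; $\mu^{(\theta)}=\delta^\theta\mu(\mathcal{V})\mu(\mathcal{W})$. A subgraph has $\mathcal{V}'\subseteq\mathcal{V}$, $\mathcal{W}'\subseteq\mathcal{W}$, $\mathcal{E}'\subseteq\mathcal{E}\cap(\mathcal{V}'\times\mathcal{W}')$, same $\mu$. "Maximal" means $\mu^{(\theta)}(G)\ge\mu^{(\theta)}(G')$ for every subgraph $G'$ (with $\theta=2+\tau$). GCD graph: a septuple $G=(\mu,\mathcal{V},\mathcal{W},\mathcal{E},\mathcal{P},f,g)$ where $(\mu,\mathcal{V},\mathcal{W},\mathcal{E})$ is a weighted bipartite graph with $\mathcal{V},\mathcal{W}\subset\mathbb{Q}_{>0}$,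 $\mathcal{P}$ is a set of primes (its "set of primes"; $(\mathcal{P},f,g)$ is its "multiplicative data"), $f,g:\mathcal{P}\to\mathbb{Z}$, and for all $p\in\mathcal{P}$ and all $(a/q,b/r)\in\mathcal{V}\times\mathcal{W}$ with $\gcd(a,q)=\gcd(b,r)=1$: $p^{f^+(p)}\mid a$, $p^{g^+(p)}\mid b$, $p^{f^-(p)}\mid q$, $p^{g^-(p)}\mid r$, and if $(a/q,b/r)\in\mathcal{E}$ then the exact power of $p$ dividing $\gcd(a,b)$ is $p^{\min\{f^+(p),g^+(p)\}}$ and that dividing $\gcd(q,r)$ is $p^{\min\{f^-(p),g^-(p)\}}$. $G$ is non-trivial if $\mathcal{E}\neq\emptyset$. Quality: $q(G)=\mu^{(\theta)}(G)\prod_{p\in\mathcal{P}}p^{|f(p)-g(p)|}$. A GCD subgraph $G'=(\mu,\mathcal{V}',\mathcal{W}',\mathcal{E}',\mathcal{P}',f',g')$ of $G$ has $\mathcal{V}'\subseteq\mathcal{V}$, $\mathcal{W}'\subseteq\mathcal{W}$, $\mathcal{E}'\subseteq\mathcal{E}$, $\mathcal{P}'\supseteq\mathcal{P}$, $f'|_{\mathcal{P}}=f$, $g'|_{\mathcal{P}}=g$. It is denominator-exact if for every $p\in\mathcal{P}'\setminus\mathcal{P}$ and every $(a/q,b/r)\in\mathcal{V}'\times\mathcal{W}'$ with $\gcd(a,q)=\gcd(b,r)=1$, $p^{f'^-(p)}$ exactly divides $q$ and $p^{g'^-(p)}$ exactly divides $r$. $\mathcal{R}(G)$ is the set of primes $p\notin\mathcal{P}$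 for which there is $(a/q,b/r)\in\mathcal{E}$ with $\gcd(a,q)=\gcd(b,r)=1$ and $p\mid\gcd(a,b)\gcd(q,r)$. $G$ is structured if for each $p\in\mathcal{R}(G)$ there is $k_p\in\mathbb{Z}$ with $(\operatorname{e}_p(v)-k_p,\operatorname{e}_p(w)-k_p)\in\{(-1,0),(0,-1),(0,0),(0,1),(1,0)\}$ for all $(v,w)\in\mathcal{E}$. For structured $G$, $\mathcal{R}_+(G)$ is the set of $p\in\mathcal{R}(G)$ with $\operatorname{e}_p(v)\ge0$ and $\operatorname{e}_p(w)\ge0$ for all $(v,w)\in\mathcal{E}$, and $\mathcal{R}_-(G)$ is the set of $p\in\mathcal{R}(G)$ with $\operatorname{e}_p(v)\le0$ and $\operatorname{e}_p(w)\le0$ for all $(v,w)\in\mathcal{E}$. Constants: $C_1=10^4/\tau$, $C_2=10MC_1^3$, $C_4=10^{10}M^2C_2^2$, $C_6=\max\{C_4,10^4MC_2,C_2^{10/\tau}\}$. *)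

theory Defs
  imports Complex_Main "HOL-Computational_Algebra.Computational_Algebra"
begin

definition rnum :: "rat \<Rightarrow> int" where "rnum v = fst (quotient_of v)"
definition rden :: "rat \<Rightarrow> int" where "rden v = snd (quotient_of v)"

definition ep :: "nat \<Rightarrow> rat \<Rightarrow> int" where
  "ep p v = int (multiplicity (int p) (rnum v)) - int (multiplicity (int p) (rden v))"

definition posp :: "int \<Rightarrow> nat" where "posp t = nat t"
definition negp :: "int \<Rightarrow> nat" where "negp t = nat (- t)"

definition wsum :: "(rat \<Rightarrow> real) \<Rightarrow> rat set \<Rightarrow> real" where
  "wsum \<mu> T = (\<Sum>t\<in>T. \<mu> t)"

definition wedges :: "(rat \<Rightarrow> real) \<Rightarrow> (rat \<times> rat) set \<Rightarrow> real" where
  "wedges \<mu> E = (\<Sum>(v,w)\<in>E. \<mu> v * \<mu> w)"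

definition weighted_bipartite :: "(rat \<Rightarrow> real) \<Rightarrow> rat set \<Rightarrow> rat set \<Rightarrow> (rat \<times> rat) set \<Rightarrow> bool" where
  "weighted_bipartite \<mu> V W E \<longleftrightarrow>
     (\<forall>x>0. \<mu> x > 0) \<and> finite V \<and> finite W \<and> V \<subseteq> {x. x > 0} \<and> W \<subseteq> {x. x > 0}
     \<and> E \<subseteq> V \<times> W"

definition density :: "(rat \<Rightarrow> real) \<Rightarrow> rat set \<Rightarrow> rat set \<Rightarrow> (rat \<times> rat) set \<Rightarrow> real" where
  "density \<mu> V W E = (if E \<noteq> {} then wedges \<mu> E / (wsum \<mu> V * wsum \<mu> W) else 0)"

definition mu_theta :: "real \<Rightarrow> (rat \<Rightarrow> real) \<Rightarrow> rat set \<Rightarrow> rat set \<Rightarrow> (rat \<times> rat) set \<Rightarrow> real" where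
  "mu_theta \<theta> \<mu> V W E = density \<mu> V W E powr \<theta> * wsum \<mu> V * wsum \<mu> W"

definition maximal :: "real \<Rightarrow> (rat \<Rightarrow> real) \<Rightarrow> rat set \<Rightarrow> rat set \<Rightarrow> (rat \<times> rat) set \<Rightarrow> bool" where
  "maximal \<theta> \<mu> V W E \<longleftrightarrow>
     (\<forall>V'' W'' E''. V'' \<subseteq> V \<longrightarrow> W'' \<subseteq> W \<longrightarrow> E'' \<subseteq> E \<inter> (V'' \<times> W'') \<longrightarrow>
        mu_theta \<theta> \<mu> V W E \<ge> mu_theta \<theta> \<mu> V'' W'' E'')"

definition gcd_graph ::
  "(rat \<Rightarrow> real) \<Rightarrow> rat set \<Rightarrow> rat set \<Rightarrow> (rat \<times> rat) set \<Rightarrow> nat set \<Rightarrow> (nat \<Rightarrow> int) \<Rightarrow> (nat \<Rightarrow> int) \<Rightarrow> bool" where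
  "gcd_graph \<mu> V W E P f g \<longleftrightarrow>
     weighted_bipartite \<mu> V W E \<and> finite P \<and> (\<forall>p\<in>P. prime p) \<and>
     (\<forall>p\<in>P. \<forall>v\<in>V. \<forall>w\<in>W.
        int p ^ posp (f p) dvd rnum v \<and> int p ^ posp (g p) dvd rnum w \<and>
        int p ^ negp (f p) dvd rden v \<and> int p ^ negp (g p) dvd rden w \<and>
        ((v, w) \<in> E \<longrightarrow>
           multiplicity (int p) (gcd (rnum v) (rnum w)) = min (posp (f p)) (posp (g p)) \<and>
           multiplicity (int p) (gcd (rden v) (rden w)) = min (negp (f p)) (negp (g p))))"

definition quality ::
  "real \<Rightarrow> (rat \<Rightarrow> real) \<Rightarrow> rat set \<Rightarrow> rat set \<Rightarrow> (rat \<times> rat) set \<Rightarrow> nat set \<Rightarrow> (nat \<Rightarrow> int) \<Rightarrow> (nat \<Rightarrow> int) \<Rightarrow> real" where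
  "quality \<theta> \<mu> V W E P f g = mu_theta \<theta> \<mu> V W E * (\<Prod>p\<in>P. real p ^ nat \<bar>f p - g p\<bar>)"

definition gcd_subgraph where
  "gcd_subgraph \<mu> V' W' E' P' f' g' V W E P f g \<longleftrightarrow>
     gcd_graph \<mu> V' W' E' P' f' g' \<and> V' \<subseteq> V \<and> W' \<subseteq> W \<and> E' \<subseteq> E \<and> P \<subseteq> P' \<and>
     (\<forall>p\<in>P. f' p = f p \<and> g' p = g p)"

definition denominator_exact where
  "denominator_exact V' W' P' f' g' P \<longleftrightarrow>
     (\<forall>p\<in>P' - P. (\<forall>v\<in>V'. multiplicity (int p) (rden v) = negp (f' p)) \<and>
                  (\<forall>w\<in>W'. multiplicity (int p) (rden w) = negp (g' p)))"

definition Rset :: "(rat \<times> rat) set \<Rightarrow> nat set \<Rightarrow> nat set" where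
  "Rset E P = {p. prime p \<and> p \<notin> P \<and>
      (\<exists>(v,w)\<in>E. int p dvd gcd (rnum v) (rnum w) * gcd (rden v) (rden w))}"

definition structured :: "(rat \<times> rat) set \<Rightarrow> nat set \<Rightarrow> bool" where
  "structured E P \<longleftrightarrow>
     (\<forall>p\<in>Rset E P. \<exists>k::int. \<forall>(v,w)\<in>E.
        (ep p v - k, ep p w - k) \<in> {(-1,0),(0,-1),(0,0),(0,1),(1,0)})"

definition Rplus :: "(rat \<times> rat) set \<Rightarrow> nat set \<Rightarrow> nat set" where
  "Rplus E P = {p\<in>Rset E P. \<forall>(v,w)\<in>E. ep p v \<ge> 0 \<and> ep p w \<ge> 0}"

definition Rminus :: "(rat \<times> rat) set \<Rightarrow> nat set \<Rightarrow> nat set" where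
  "Rminus E P = {p\<in>Rset E P. \<forall>(v,w)\<in>E. ep p v \<le> 0 \<and> ep p w \<le> 0}"

definition C1 :: "real \<Rightarrow> real" where "C1 \<tau> = 10^4 / \<tau>"
definition C2 :: "real \<Rightarrow> real \<Rightarrow> real" where "C2 \<tau> M = 10 * M * C1 \<tau> ^ 3"
definition C4 :: "real \<Rightarrow> real \<Rightarrow> real" where "C4 \<tau> M = 10^10 * M^2 * C2 \<tau> M ^ 2"
definition C6 :: "real \<Rightarrow> real \<Rightarrow> real" where
  "C6 \<tau> M = Max {C4 \<tau> M, 10^4 * M * C2 \<tau> M, C2 \<tau> M powr (10 / \<tau>)}"

end

theory Submission
  imports Defs "HOL-Analysis.Analysis"
begin

text \<open>Pick a prime \<open>p\<close> of \<open>Rplus E P\<close>. As the graph is structured, there is \<open>k \<ge> 1\<close> such that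
  along every edge the \<open>p\<close>-adic valuations of the endpoints are \<open>(k, k)\<close>, \<open>(k \<plusminus> 1, k)\<close> or
  \<open>(k, k \<plusminus> 1)\<close>. Sorting the vertices by whether their valuation is \<open>k - 1\<close> or at least \<open>k\<close>, every
  edge lies in one of three pieces, with data \<open>(k, k)\<close>, \<open>(k - 1, k)\<close> and \<open>(k, k - 1)\<close> at \<open>p\<close>.
  Since \<open>mu_theta\<close> equals \<open>(e / w) powr \<theta> * w\<close> for the edge mass \<open>e\<close> and vertex mass \<open>w\<close>, which is
  subadditive and decreasing in \<open>w\<close>, the three pieces together carry at least \<open>mu_theta\<close> of the
  whole graph. If an unbalanced piece carries a \<open>(1 - p powr -(1 + \<tau>/4)) / p\<close> share, it becomes
  the new graph, the factor \<open>p ^ |f' p - g' p| = p\<close> in the quality compensating for the \<open>1 / p\<close>;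
  otherwise the balanced piece keeps a \<open>(1 - 1/p)\<^sup>2 (1 - p powr -(1 + \<tau>/4))\<close> share. Passing to
  a maximal subgraph only increases \<open>mu_theta\<close>.\<close>

section \<open>Valuations of reduced fractions\<close>

lemma rden_pos: "0 < rden v"
  unfolding rden_def by (rule quotient_of_denom_pos')

lemma coprime_rnum_rden: "coprime (rnum v) (rden v)"
  unfolding rnum_def rden_def by (rule quotient_of_coprime) simp

lemma rnum_pos: assumes "0 < v" shows "0 < rnum v"
proof -
  have "v = of_int (rnum v) / of_int (rden v)"
    unfolding rnum_def rden_def by (rule quotient_of_div) simp
  then have "0 < rat_of_int (rnum v) / rat_of_int (rden v)" using assms by simp
  then show ?thesis
    using rden_pos[of v] by (simp add: zero_less_divide_iff)
qed

lemma multiplicity_rnum_or_rden_eq_0: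
  assumes "prime (p::nat)"
  shows "multiplicity (int p) (rnum v) = 0 \<or> multiplicity (int p) (rden v) = 0"
proof -
  have "\<not> (int p dvd rnum v \<and> int p dvd rden v)"
    using assms coprime_common_divisor[OF coprime_rnum_rden] prime_nat_int_transfer
    by (metis not_prime_unit)
  then show ?thesis
    by (metis not_dvd_imp_multiplicity_0)
qed

lemma ep_nonneg_multiplicity:
  assumes "prime (p::nat)" "0 \<le> ep p v"
  shows "multiplicity (int p) (rden v) = 0" "int (multiplicity (int p) (rnum v)) = ep p v"
  using multiplicity_rnum_or_rden_eq_0[OF assms(1), of v] assms(2)
  unfolding ep_def by auto

lemma ep_pos_if_dvd_rnum:
  assumes "prime (p::nat)" "0 < v" "int p dvd rnum v"
  shows "1 \<le> ep p v"
proof -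
  have "0 < multiplicity (int p) (rnum v)"
    using assms rnum_pos[of v] prime_nat_int_transfer
    by (simp add: prime_multiplicity_gt_zero_iff)
  then show ?thesis
    using multiplicity_rnum_or_rden_eq_0[OF assms(1), of v] unfolding ep_def by auto
qed

lemma ep_neg_if_dvd_rden:
  assumes "prime (p::nat)" "int p dvd rden v"
  shows "ep p v \<le> -1"
proof -
  have "0 < multiplicity (int p) (rden v)"
    using assms rden_pos[of v] prime_nat_int_transfer
    by (simp add: prime_multiplicity_gt_zero_iff)
  then show ?thesis
    using multiplicity_rnum_or_rden_eq_0[OF assms(1), of v] unfolding ep_def by auto
qed

lemma pow_dvd_rnum_if_le_ep:
  assumes "prime (p::nat)" "0 \<le> a" "a \<le> ep p v"
  shows "int p ^ nat a dvd rnum v"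
proof (rule multiplicity_dvd')
  show "nat a \<le> multiplicity (int p) (rnum v)"
    using ep_nonneg_multiplicity(2)[OF assms(1), of v] assms(2,3) by linarith
qed

lemma multiplicity_gcd_rnum:
  assumes "prime (p::nat)" "0 < v" "0 < w" "0 \<le> ep p v" "0 \<le> ep p w"
  shows "int (multiplicity (int p) (gcd (rnum v) (rnum w))) = min (ep p v) (ep p w)"
  using multiplicity_gcd[of "rnum v" "rnum w" "int p"] rnum_pos[OF assms(2)] rnum_pos[OF assms(3)]
    ep_nonneg_multiplicity(2)[OF assms(1,4)] ep_nonneg_multiplicity(2)[OF assms(1,5)] assms(1)
  by simp

lemma multiplicity_gcd_rden:
  assumes "prime (p::nat)" "0 \<le> ep p v"
  shows "multiplicity (int p) (gcd (rden v) (rden w)) = 0"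
proof -
  have "\<not> int p dvd rden v"
    using ep_neg_if_dvd_rden[OF assms(1)] assms(2) by fastforce
  then show ?thesis
    by (meson dvd_trans gcd_dvd1 not_dvd_imp_multiplicity_0)
qed

section \<open>Structured graphs and the sets \<open>Rplus\<close>, \<open>Rminus\<close>\<close>

definition level_pattern :: "int \<Rightarrow> int \<Rightarrow> int \<Rightarrow> bool" where
  "level_pattern k x y \<longleftrightarrow> (x - k, y - k) \<in> {(-1,0),(0,-1),(0,0),(0,1),(1,0)}"

lemma level_pattern_iff:
  "level_pattern k x y \<longleftrightarrow>
     (x = k - 1 \<and> y = k) \<or> (x = k \<and> y = k - 1) \<or> (x = k \<and> y = k) \<or>
     (x = k \<and> y = k + 1) \<or> (x = k + 1 \<and> y = k)"
  unfolding level_pattern_def by auto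

lemma level_pattern_bounds:
  "level_pattern k x y \<Longrightarrow> k - 1 \<le> x \<and> x \<le> k + 1 \<and> k - 1 \<le> y \<and> y \<le> k + 1"
  unfolding level_pattern_iff by auto

lemma structuredE:
  assumes "structured E P" "q \<in> Rset E P"
  obtains k where "\<forall>(v,w)\<in>E. level_pattern k (ep q v) (ep q w)"
  using assms unfolding structured_def level_pattern_def by blast

lemma Rset_mono: "E' \<subseteq> E \<Longrightarrow> P \<subseteq> P' \<Longrightarrow> Rset E' P' \<subseteq> Rset E P"
  unfolding Rset_def by blast

lemma Rset_witness:
  assumes "q \<in> Rset E P" and pos: "\<forall>(v,w)\<in>E. 0 < v \<and> 0 < w"
  obtains v w where "(v,w) \<in> E"
    "(1 \<le> ep q v \<and> 1 \<le> ep q w) \<or> (ep q v \<le> -1 \<and> ep q w \<le> -1)"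
proof -
  obtain v w where vw: "(v,w) \<in> E" and q: "prime q"
    and dvd: "int q dvd gcd (rnum v) (rnum w) * gcd (rden v) (rden w)"
    using assms(1) unfolding Rset_def by blast
  have pos_vw: "0 < v" "0 < w"
    using pos vw by auto
  have "prime (int q)"
    using q by simp
  then consider "int q dvd rnum v" "int q dvd rnum w" | "int q dvd rden v" "int q dvd rden w"
    using dvd by (auto simp: prime_dvd_mult_iff)
  then have "(1 \<le> ep q v \<and> 1 \<le> ep q w) \<or> (ep q v \<le> -1 \<and> ep q w \<le> -1)"
  proof cases
    case 1
    then show ?thesis
      using ep_pos_if_dvd_rnum[OF q pos_vw(1)] ep_pos_if_dvd_rnum[OF q pos_vw(2)] by simp
  next
    case 2
    then show ?thesis
      using ep_neg_if_dvd_rden[OF q] by simp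
  qed
  with vw that show thesis by blast
qed

lemma structured_level_pos:
  assumes "structured E P" "q \<in> Rset E P" "(v,w) \<in> E" "1 \<le> ep q v" "1 \<le> ep q w"
  obtains k where "1 \<le> k" "\<forall>(x,y)\<in>E. level_pattern k (ep q x) (ep q y)"
proof -
  obtain k where k: "\<forall>(x,y)\<in>E. level_pattern k (ep q x) (ep q y)"
    using structuredE[OF assms(1,2)] .
  then have "level_pattern k (ep q v) (ep q w)"
    using assms(3) by blast
  then have "1 \<le> k"
    using assms(4,5) unfolding level_pattern_iff by linarith
  with k that show thesis by blast
qed

lemma structured_level_neg:
  assumes "structured E P" "q \<in> Rset E P" "(v,w) \<in> E" "ep q v \<le> -1" "ep q w \<le> -1"
  obtains k where "k \<le> -1" "\<forall>(x,y)\<in>E. level_pattern k (ep q x) (ep q y)"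
proof -
  obtain k where k: "\<forall>(x,y)\<in>E. level_pattern k (ep q x) (ep q y)"
    using structuredE[OF assms(1,2)] .
  then have "level_pattern k (ep q v) (ep q w)"
    using assms(3) by blast
  then have "k \<le> -1"
    using assms(4,5) unfolding level_pattern_iff by linarith
  with k that show thesis by blast
qed

lemma Rplus_level:
  assumes "structured E P" "p \<in> Rplus E P" "\<forall>(v,w)\<in>E. 0 < v \<and> 0 < w"
  obtains k where "1 \<le> k" "\<forall>(x,y)\<in>E. level_pattern k (ep p x) (ep p y)"
proof -
  have p: "p \<in> Rset E P" and nonneg: "\<forall>(v,w)\<in>E. 0 \<le> ep p v \<and> 0 \<le> ep p w"
    using assms(2) unfolding Rplus_def by auto
  obtain v w where vw: "(v,w) \<in> E"
    and "(1 \<le> ep p v \<and> 1 \<le> ep p w) \<or> (ep p v \<le> -1 \<and> ep p w \<le> -1)"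
    using Rset_witness[OF p assms(3)] by blast
  with nonneg have "1 \<le> ep p v" "1 \<le> ep p w" by auto
  from structured_level_pos[OF assms(1) p vw this] that show thesis by blast
qed

lemma Rplus_mono:
  assumes "structured E P" "E' \<subseteq> E" "P \<subseteq> P'" "\<forall>(v,w)\<in>E. 0 < v \<and> 0 < w"
  shows "Rplus E' P' \<subseteq> Rplus E P"
proof
  fix q assume "q \<in> Rplus E' P'"
  then have q': "q \<in> Rset E' P'" and nonneg: "\<forall>(v,w)\<in>E'. 0 \<le> ep q v \<and> 0 \<le> ep q w"
    unfolding Rplus_def by auto
  have q: "q \<in> Rset E P" using q' Rset_mono[OF assms(2,3)] by blast
  have pos': "\<forall>(v,w)\<in>E'. 0 < v \<and> 0 < w"
    using assms(2,4) by blast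
  obtain v w where vw: "(v,w) \<in> E'"
    and "(1 \<le> ep q v \<and> 1 \<le> ep q w) \<or> (ep q v \<le> -1 \<and> ep q w \<le> -1)"
    using Rset_witness[OF q' pos'] by blast
  with nonneg have "1 \<le> ep q v" "1 \<le> ep q w" by auto
  moreover have "(v,w) \<in> E" using vw assms(2) by blast
  ultimately obtain k where "1 \<le> k" "\<forall>(x,y)\<in>E. level_pattern k (ep q x) (ep q y)"
    using structured_level_pos[OF assms(1) q] by blast
  then have "\<forall>(x,y)\<in>E. 0 \<le> ep q x \<and> 0 \<le> ep q y"
    by (fastforce dest: level_pattern_bounds)
  with q show "q \<in> Rplus E P" unfolding Rplus_def by blast
qed

lemma Rminus_mono:
  assumes "structured E P" "E' \<subseteq> E" "P \<subseteq> P'" "\<forall>(v,w)\<in>E. 0 < v \<and> 0 < w"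
  shows "Rminus E' P' \<subseteq> Rminus E P"
proof
  fix q assume "q \<in> Rminus E' P'"
  then have q': "q \<in> Rset E' P'" and nonpos: "\<forall>(v,w)\<in>E'. ep q v \<le> 0 \<and> ep q w \<le> 0"
    unfolding Rminus_def by auto
  have q: "q \<in> Rset E P" using q' Rset_mono[OF assms(2,3)] by blast
  have pos': "\<forall>(v,w)\<in>E'. 0 < v \<and> 0 < w"
    using assms(2,4) by blast
  obtain v w where vw: "(v,w) \<in> E'"
    and "(1 \<le> ep q v \<and> 1 \<le> ep q w) \<or> (ep q v \<le> -1 \<and> ep q w \<le> -1)"
    using Rset_witness[OF q' pos'] by blast
  with nonpos have "ep q v \<le> -1" "ep q w \<le> -1" by auto
  moreover have "(v,w) \<in> E" using vw assms(2) by blast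
  ultimately obtain k where "k \<le> -1" "\<forall>(x,y)\<in>E. level_pattern k (ep q x) (ep q y)"
    using structured_level_neg[OF assms(1) q] by blast
  then have "\<forall>(x,y)\<in>E. ep q x \<le> 0 \<and> ep q y \<le> 0"
    by (fastforce dest: level_pattern_bounds)
  with q show "q \<in> Rminus E P" unfolding Rminus_def by blast
qed

lemma Rplus_insert_psubset:
  assumes "structured E P" "C \<subseteq> E" "p \<in> Rplus E P" "\<forall>(v,w)\<in>E. 0 < v \<and> 0 < w"
  shows "Rplus C (insert p P) \<subset> Rplus E P"
proof -
  have "p \<notin> Rplus C (insert p P)"
    unfolding Rplus_def Rset_def by blast
  with Rplus_mono[OF assms(1,2) _ assms(4), of "insert p P"] assms(3) show ?thesis
    by blast
qed

section \<open>The functional \<open>mu_theta\<close>\<close>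

definition theta_mass :: "real \<Rightarrow> real \<Rightarrow> real \<Rightarrow> real" where
  "theta_mass \<theta> e w = (e / w) powr \<theta> * w"

lemma mu_theta_eq_theta_mass:
  "mu_theta \<theta> \<mu> V W E = theta_mass \<theta> (wedges \<mu> E) (wsum \<mu> V * wsum \<mu> W)"
  unfolding mu_theta_def Defs.density_def theta_mass_def
  by (cases "E = {}") (auto simp: wedges_def)

lemma theta_mass_zero_left [simp]: "theta_mass \<theta> 0 w = 0"
  unfolding theta_mass_def by simp

lemma theta_mass_antimono:
  assumes "1 \<le> \<theta>" "0 \<le> e" "e \<le> w" "w \<le> w'"
  shows "theta_mass \<theta> e w' \<le> theta_mass \<theta> e w"
proof (cases "e = 0")
  case False
  have split_power: "theta_mass \<theta> e x = (e / x) powr (\<theta> - 1) * e" if "0 < x" for x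
  proof -
    have "(e / x) powr \<theta> = (e / x) powr (\<theta> - 1) * (e / x)"
      using assms(2) that by (simp add: powr_diff)
    then show ?thesis
      using that unfolding theta_mass_def by simp
  qed
  have "(e / w') powr (\<theta> - 1) \<le> (e / w) powr (\<theta> - 1)"
    using assms False by (intro powr_mono2 divide_left_mono) auto
  then show ?thesis
    using assms False split_power[of w] split_power[of w'] by (simp add: mult_right_mono)
qed simp

text \<open>Subadditivity is the convexity of \<open>x powr \<theta>\<close>, applied at the edge densities
  \<open>e\<^sub>1 / w\<^sub>1\<close> and \<open>e\<^sub>2 / w\<^sub>2\<close> with weights proportional to \<open>w\<^sub>1\<close> and \<open>w\<^sub>2\<close>.\<close>
lemma theta_mass_subadditive:
  assumes "1 \<le> \<theta>" "0 \<le> e1" "0 \<le> e2" "e1 \<le> w1" "e2 \<le> w2"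
  shows "theta_mass \<theta> (e1 + e2) (w1 + w2) \<le> theta_mass \<theta> e1 w1 + theta_mass \<theta> e2 w2"
proof -
  consider "e1 = 0" | "e2 = 0" | "0 < e1" "0 < e2"
    using assms(2,3) by linarith
  then show ?thesis
  proof cases
    case 1
    then show ?thesis
      using assms theta_mass_antimono[of \<theta> e2 w2 "w1 + w2"] by simp
  next
    case 2
    then show ?thesis
      using assms theta_mass_antimono[of \<theta> e1 w1 "w1 + w2"] by simp
  next
    case 3
    then have pos: "0 < w1" "0 < w2"
      using assms by auto
    define t where "t = w2 / (w1 + w2)"
    have t: "0 \<le> t" "t \<le> 1" "1 - t = w1 / (w1 + w2)"
      using pos unfolding t_def by (auto simp: field_simps)
    have mean: "(1 - t) * (e1 / w1) + t * (e2 / w2) = (e1 + e2) / (w1 + w2)"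
      using pos unfolding t(3) unfolding t_def by (simp add: add_divide_distrib)
    have "((e1 + e2) / (w1 + w2)) powr \<theta> \<le> (1 - t) * (e1 / w1) powr \<theta> + t * (e2 / w2) powr \<theta>"
      using convex_onD[OF powr_convex[OF assms(1)] t(1,2), of "e1 / w1" "e2 / w2"] 3 pos mean
      by simp
    then have "theta_mass \<theta> (e1 + e2) (w1 + w2)
        \<le> ((1 - t) * (e1 / w1) powr \<theta> + t * (e2 / w2) powr \<theta>) * (w1 + w2)"
      unfolding theta_mass_def using pos by (intro mult_right_mono) auto
    also have "\<dots> = (e1 / w1) powr \<theta> * ((1 - t) * (w1 + w2)) + (e2 / w2) powr \<theta> * (t * (w1 + w2))"
      by (simp add: algebra_simps)
    also have "\<dots> = theta_mass \<theta> e1 w1 + theta_mass \<theta> e2 w2"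
      using pos unfolding theta_mass_def t(3) unfolding t_def by simp
    finally show ?thesis .
  qed
qed

lemma theta_mass_le_sum3:
  assumes "1 \<le> \<theta>" "0 \<le> a" "a \<le> wa" "0 \<le> b" "b \<le> wb" "0 \<le> c" "c \<le> wc" "wa + wb + wc \<le> w"
  shows "theta_mass \<theta> (a + b + c) w \<le> theta_mass \<theta> a wa + theta_mass \<theta> b wb + theta_mass \<theta> c wc"
proof -
  have "theta_mass \<theta> (a + b + c) w \<le> theta_mass \<theta> (a + b + c) (wa + wb + wc)"
    using assms by (intro theta_mass_antimono) auto
  also have "\<dots> \<le> theta_mass \<theta> (a + b) (wa + wb) + theta_mass \<theta> c wc"
    using assms by (intro theta_mass_subadditive) auto
  also have "theta_mass \<theta> (a + b) (wa + wb) \<le> theta_mass \<theta> a wa + theta_mass \<theta> b wb"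
    using assms by (intro theta_mass_subadditive) auto
  finally show ?thesis
    by simp
qed

lemma weighted_bipartite_subgraph:
  assumes "weighted_bipartite \<mu> V W E" "A \<subseteq> V" "B \<subseteq> W" "C \<subseteq> A \<times> B"
  shows "weighted_bipartite \<mu> A B C"
  using assms finite_subset unfolding weighted_bipartite_def by blast

lemma weighted_bipartite_weight_pos:
  "weighted_bipartite \<mu> V W E \<Longrightarrow> x \<in> V \<union> W \<Longrightarrow> 0 < \<mu> x"
  unfolding weighted_bipartite_def by auto

lemma weighted_bipartite_edges_pos:
  "weighted_bipartite \<mu> V W E \<Longrightarrow> \<forall>(v,w)\<in>E. 0 < v \<and> 0 < w"
  unfolding weighted_bipartite_def by auto

lemma wsum_disjoint_le:
  assumes "finite V" "\<forall>x\<in>V. 0 \<le> \<mu> x" "A \<subseteq> V" "B \<subseteq> V" "A \<inter> B = {}"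
  shows "wsum \<mu> A + wsum \<mu> B \<le> wsum \<mu> V"
proof -
  have "wsum \<mu> A + wsum \<mu> B = wsum \<mu> (A \<union> B)"
    unfolding wsum_def using assms finite_subset by (subst sum.union_disjoint) auto
  also have "\<dots> \<le> wsum \<mu> V"
    unfolding wsum_def using assms by (intro sum_mono2) auto
  finally show ?thesis .
qed

lemma wedges_le_wsum_mult:
  assumes "finite A" "finite B" "\<forall>x\<in>A \<union> B. 0 \<le> \<mu> x" "E \<subseteq> A \<times> B"
  shows "wedges \<mu> E \<le> wsum \<mu> A * wsum \<mu> B"
proof -
  have "wedges \<mu> E \<le> (\<Sum>(v,w)\<in>A \<times> B. \<mu> v * \<mu> w)"
    unfolding wedges_def using assms by (intro sum_mono2) auto
  also have "\<dots> = wsum \<mu> A * wsum \<mu> B"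
    unfolding wsum_def sum_product sum.cartesian_product by simp
  finally show ?thesis .
qed

lemma wedges_nonneg:
  "\<forall>x\<in>A \<union> B. 0 \<le> \<mu> x \<Longrightarrow> E \<subseteq> A \<times> B \<Longrightarrow> 0 \<le> wedges \<mu> E"
  unfolding wedges_def by (intro sum_nonneg) auto

lemma wsum_nonneg:
  "weighted_bipartite \<mu> V W E \<Longrightarrow> X \<subseteq> V \<union> W \<Longrightarrow> 0 \<le> wsum \<mu> X"
  unfolding wsum_def using weighted_bipartite_weight_pos less_imp_le by (metis subsetD sum_nonneg)

lemma wedges_restrict_bounds:
  assumes "weighted_bipartite \<mu> V W E" "X \<subseteq> V" "Y \<subseteq> W"
  shows "0 \<le> wedges \<mu> (E \<inter> X \<times> Y)" "wedges \<mu> (E \<inter> X \<times> Y) \<le> wsum \<mu> X * wsum \<mu> Y"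
proof -
  have "\<forall>x\<in>X \<union> Y. 0 \<le> \<mu> x"
    using weighted_bipartite_weight_pos[OF assms(1)] assms(2,3) less_imp_le by blast
  moreover have "finite X" "finite Y"
    using assms finite_subset unfolding weighted_bipartite_def by blast+
  moreover have "E \<inter> X \<times> Y \<subseteq> X \<times> Y"
    by blast
  ultimately show "0 \<le> wedges \<mu> (E \<inter> X \<times> Y)" "wedges \<mu> (E \<inter> X \<times> Y) \<le> wsum \<mu> X * wsum \<mu> Y"
    using wedges_nonneg[of X Y \<mu>] wedges_le_wsum_mult[of X Y \<mu>] by simp_all
qed

lemma mu_theta_empty [simp]: "mu_theta \<theta> \<mu> V W {} = 0"
  unfolding mu_theta_eq_theta_mass by (simp add: wedges_def)

lemma mu_theta_pos:
  assumes "weighted_bipartite \<mu> V W E" "E \<noteq> {}"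
  shows "0 < mu_theta \<theta> \<mu> V W E"
proof -
  have fin: "finite V" "finite W" and E: "E \<subseteq> V \<times> W"
    using assms(1) unfolding weighted_bipartite_def by auto
  have pos: "0 < \<mu> x" if "x \<in> V \<union> W" for x
    using weighted_bipartite_weight_pos[OF assms(1) that] .
  have "finite E"
    using E fin finite_subset by blast
  then have "0 < wedges \<mu> E"
    unfolding wedges_def using assms(2) E pos by (intro sum_pos) auto
  moreover have "0 < wsum \<mu> V" "0 < wsum \<mu> W"
    unfolding wsum_def using assms(2) E fin pos by (auto intro!: sum_pos)
  ultimately show ?thesis
    unfolding mu_theta_def Defs.density_def using assms(2) by simp
qed

lemma exists_maximal_subgraph:
  assumes "finite V" "finite W" "E \<subseteq> V \<times> W"
  obtains A B C where "A \<subseteq> V" "B \<subseteq> W" "C \<subseteq> E \<inter> A \<times> B"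
    "maximal \<theta> \<mu> A B C" "mu_theta \<theta> \<mu> V W E \<le> mu_theta \<theta> \<mu> A B C"
proof -
  define S where "S = {(A, B, C). A \<subseteq> V \<and> B \<subseteq> W \<and> C \<subseteq> E \<inter> A \<times> B}"
  define h where "h = (\<lambda>(A, B, C). mu_theta \<theta> \<mu> A B C)"
  have "S \<subseteq> Pow V \<times> Pow W \<times> Pow (V \<times> W)"
    unfolding S_def by auto
  then have "finite S"
    by (rule finite_subset) (use assms in auto)
  moreover have VWE: "(V, W, E) \<in> S"
    unfolding S_def using assms(3) by auto
  ultimately have "Max (h ` S) \<in> h ` S"
    by (intro Max_in) auto
  then obtain A B C where ABC: "(A, B, C) \<in> S" "h (A, B, C) = Max (h ` S)"
    by auto
  have le_max: "h G \<le> h (A, B, C)" if "G \<in> S" for G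
    using \<open>finite S\<close> that ABC(2) by simp
  have "maximal \<theta> \<mu> A B C"
    unfolding maximal_def
  proof (intro allI impI)
    fix V' W' E' assume "V' \<subseteq> A" "W' \<subseteq> B" "E' \<subseteq> C \<inter> V' \<times> W'"
    then have "(V', W', E') \<in> S"
      using ABC(1) unfolding S_def by auto
    from le_max[OF this] show "mu_theta \<theta> \<mu> V' W' E' \<le> mu_theta \<theta> \<mu> A B C"
      unfolding h_def by simp
  qed
  with ABC(1) le_max[OF VWE] that show thesis
    unfolding S_def h_def by auto
qed

section \<open>Splitting at a prime of \<open>Rplus\<close>\<close>

lemma three_rectangles_le:
  fixes xl xh yl yh X Y :: real
  assumes "xl + xh \<le> X" "yl + yh \<le> Y" "0 \<le> xl" "0 \<le> xh" "0 \<le> yl" "0 \<le> yh"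
  shows "xh * yh + xl * yh + xh * yl \<le> X * Y"
proof -
  have "xh * yh + xl * yh + xh * yl \<le> (xl + xh) * (yl + yh)"
    using assms(3,5) by (simp add: algebra_simps)
  also have "\<dots> \<le> X * Y"
    using assms by (intro mult_mono) auto
  finally show ?thesis .
qed

lemma mu_theta_le_level_split:
  assumes "1 \<le> \<theta>" and G: "weighted_bipartite \<mu> V W E"
    and V: "Vlo \<subseteq> V" "Vhi \<subseteq> V" "Vlo \<inter> Vhi = {}"
    and W: "Wlo \<subseteq> W" "Whi \<subseteq> W" "Wlo \<inter> Whi = {}"
    and E: "E \<subseteq> Vhi \<times> Whi \<union> Vlo \<times> Whi \<union> Vhi \<times> Wlo"
  shows "mu_theta \<theta> \<mu> V W E \<le> mu_theta \<theta> \<mu> Vhi Whi (E \<inter> Vhi \<times> Whi)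
    + mu_theta \<theta> \<mu> Vlo Whi (E \<inter> Vlo \<times> Whi) + mu_theta \<theta> \<mu> Vhi Wlo (E \<inter> Vhi \<times> Wlo)"
proof -
  have fin: "finite V" "finite W" "finite E"
    using G finite_subset unfolding weighted_bipartite_def by (auto intro: finite_cartesian_product)
  have nonneg: "\<forall>x\<in>V. 0 \<le> \<mu> x" "\<forall>x\<in>W. 0 \<le> \<mu> x"
    using weighted_bipartite_weight_pos[OF G] less_imp_le by blast+
  have parts: "(E \<inter> Vhi \<times> Whi \<union> E \<inter> Vlo \<times> Whi) \<union> E \<inter> Vhi \<times> Wlo = E"
    using E by blast
  have disjoint: "E \<inter> Vhi \<times> Whi \<inter> (E \<inter> Vlo \<times> Whi) = {}"
    "(E \<inter> Vhi \<times> Whi \<union> E \<inter> Vlo \<times> Whi) \<inter> (E \<inter> Vhi \<times> Wlo) = {}"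
    using V(3) W(3) by blast+
  have "wedges \<mu> E = wedges \<mu> (E \<inter> Vhi \<times> Whi \<union> E \<inter> Vlo \<times> Whi) + wedges \<mu> (E \<inter> Vhi \<times> Wlo)"
    unfolding wedges_def using fin(3)
    by (subst (1) parts[symmetric], intro sum.union_disjoint[OF _ _ disjoint(2)]) auto
  also have "wedges \<mu> (E \<inter> Vhi \<times> Whi \<union> E \<inter> Vlo \<times> Whi)
      = wedges \<mu> (E \<inter> Vhi \<times> Whi) + wedges \<mu> (E \<inter> Vlo \<times> Whi)"
    unfolding wedges_def using fin(3) by (intro sum.union_disjoint[OF _ _ disjoint(1)]) auto
  finally have edges: "wedges \<mu> E
      = wedges \<mu> (E \<inter> Vhi \<times> Whi) + wedges \<mu> (E \<inter> Vlo \<times> Whi) + wedges \<mu> (E \<inter> Vhi \<times> Wlo)" .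
  have "wsum \<mu> Vlo + wsum \<mu> Vhi \<le> wsum \<mu> V" "wsum \<mu> Wlo + wsum \<mu> Whi \<le> wsum \<mu> W"
    using wsum_disjoint_le[OF fin(1) nonneg(1) V] wsum_disjoint_le[OF fin(2) nonneg(2) W] .
  moreover have "0 \<le> wsum \<mu> Vlo" "0 \<le> wsum \<mu> Vhi" "0 \<le> wsum \<mu> Wlo" "0 \<le> wsum \<mu> Whi"
    using V W by (auto intro!: wsum_nonneg[OF G])
  ultimately have "wsum \<mu> Vhi * wsum \<mu> Whi + wsum \<mu> Vlo * wsum \<mu> Whi + wsum \<mu> Vhi * wsum \<mu> Wlo
      \<le> wsum \<mu> V * wsum \<mu> W"
    by (rule three_rectangles_le)
  then show ?thesis
    unfolding mu_theta_eq_theta_mass edges using assms(1)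
    by (intro theta_mass_le_sum3 wedges_restrict_bounds[OF G] V W) auto
qed

lemma third_part_lower_bound:
  fixes p e G A B C :: real
  assumes "2 \<le> p" "1 \<le> e * p^2" "0 \<le> G" "G \<le> A + B + C"
    and "p * B \<le> (1 - e) * G" "p * C \<le> (1 - e) * G"
  shows "G * ((1 - 1/p)^2 * (1 - e)) \<le> A"
proof -
  have "0 < e"
    using assms(1,2) by (smt (verit) mult_nonpos_nonneg zero_le_power2)
  have "(1 - 1/p)^2 * (1 - e) = 1 - 2 * (1 - e) / p + (1 - e - e * p^2) / p^2"
    using assms(1) by (simp add: field_simps power2_eq_square)
  also have "\<dots> \<le> 1 - 2 * (1 - e) / p"
    using assms(2) \<open>0 < e\<close> by (simp add: divide_nonpos_nonneg)
  finally have "G * ((1 - 1/p)^2 * (1 - e)) \<le> G * (1 - 2 * (1 - e) / p)"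
    using assms(3) by (rule mult_left_mono)
  also have "\<dots> = G - 2 * ((1 - e) * G / p)"
    by (simp add: algebra_simps)
  also have "\<dots> \<le> A"
  proof -
    have "B \<le> (1 - e) * G / p" "C \<le> (1 - e) * G / p"
      using assms(1,5,6) by (simp_all add: pos_le_divide_eq mult.commute)
    then show ?thesis
      using assms(4) by linarith
  qed
  finally show ?thesis .
qed

definition loss_factor :: "real \<Rightarrow> nat \<Rightarrow> int \<Rightarrow> int \<Rightarrow> real" where
  "loss_factor s p a b = (1 - (if a = b \<and> b > 0 then 1 else 0) / real p)^2 * (1 - 1 / real p powr s)"

lemma loss_factor_pos:
  assumes "prime p" "0 < s"
  shows "0 < loss_factor s p a b"
proof -
  have p2: "2 \<le> real p"
    using prime_ge_2_nat[OF assms(1)] by simp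
  then have "1 < real p powr s"
    using assms(2) by simp
  then have "0 < 1 - 1 / real p powr s"
    by (simp add: divide_less_eq)
  moreover have "0 < (1 - (if a = b \<and> b > 0 then 1 else 0) / real p)^2"
    using p2 by simp
  ultimately show ?thesis
    unfolding loss_factor_def by simp
qed

lemma large_piece_cases:
  fixes G A B C :: real
  assumes "prime p" "0 < s" "s \<le> 2" "1 \<le> k" "0 \<le> G" "G \<le> A + B + C"
  shows "G * loss_factor s p (k - 1) k \<le> real p * B \<or> G * loss_factor s p k (k - 1) \<le> real p * C
    \<or> G * loss_factor s p k k \<le> A"
proof -
  define e where "e = 1 / real p powr s"
  have p2: "2 \<le> real p"
    using prime_ge_2_nat[OF assms(1)] by simp
  have "real p powr s \<le> real p powr 2"
    using p2 assms(3) by (intro powr_mono) auto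
  then have e_large: "1 \<le> e * real p ^ 2"
    unfolding e_def using p2 by (simp add: powr_realpow)
  have loss: "loss_factor s p (k - 1) k = 1 - e" "loss_factor s p k (k - 1) = 1 - e"
    "loss_factor s p k k = (1 - 1 / real p)^2 * (1 - e)"
    unfolding loss_factor_def e_def using assms(4) by auto
  consider "(1 - e) * G \<le> real p * B" | "(1 - e) * G \<le> real p * C"
    | "real p * B \<le> (1 - e) * G" "real p * C \<le> (1 - e) * G"
    by linarith
  then show ?thesis
  proof cases
    case 3
    then show ?thesis
      using third_part_lower_bound[OF p2 e_large assms(5,6)] unfolding loss by simp
  qed (simp_all add: loss mult.commute)
qed

definition nonneg_padic_data :: "nat \<Rightarrow> int \<Rightarrow> int \<Rightarrow> rat set \<Rightarrow> rat set \<Rightarrow> (rat \<times> rat) set \<Rightarrow> bool" where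
  "nonneg_padic_data p a b V W E \<longleftrightarrow> 0 \<le> a \<and> 0 \<le> b \<and>
     (\<forall>v\<in>V. a \<le> ep p v) \<and> (\<forall>w\<in>W. b \<le> ep p w) \<and> (\<forall>(v,w)\<in>E. min (ep p v) (ep p w) = min a b)"

lemma nonneg_padic_data_mono:
  "nonneg_padic_data p a b V W E \<Longrightarrow> A \<subseteq> V \<Longrightarrow> B \<subseteq> W \<Longrightarrow> C \<subseteq> E \<Longrightarrow> nonneg_padic_data p a b A B C"
  unfolding nonneg_padic_data_def by blast

lemma level_split:
  assumes "1 \<le> \<theta>" and G: "weighted_bipartite \<mu> V W E"
    and k: "1 \<le> k" and levels: "\<forall>(v,w)\<in>E. level_pattern k (ep p v) (ep p w)"
  obtains Vlo Vhi Wlo Whi where "Vlo \<subseteq> V" "Vhi \<subseteq> V" "Wlo \<subseteq> W" "Whi \<subseteq> W"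
    "mu_theta \<theta> \<mu> V W E \<le> mu_theta \<theta> \<mu> Vhi Whi (E \<inter> Vhi \<times> Whi)
      + mu_theta \<theta> \<mu> Vlo Whi (E \<inter> Vlo \<times> Whi) + mu_theta \<theta> \<mu> Vhi Wlo (E \<inter> Vhi \<times> Wlo)"
    "nonneg_padic_data p k k Vhi Whi (E \<inter> Vhi \<times> Whi)"
    "nonneg_padic_data p (k - 1) k Vlo Whi (E \<inter> Vlo \<times> Whi)"
    "nonneg_padic_data p k (k - 1) Vhi Wlo (E \<inter> Vhi \<times> Wlo)"
proof -
  define Vlo where "Vlo = {v\<in>V. ep p v = k - 1}"
  define Vhi where "Vhi = {v\<in>V. k \<le> ep p v}"
  define Wlo where "Wlo = {w\<in>W. ep p w = k - 1}"
  define Whi where "Whi = {w\<in>W. k \<le> ep p w}"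
  have sets: "Vlo \<subseteq> V" "Vhi \<subseteq> V" "Vlo \<inter> Vhi = {}" "Wlo \<subseteq> W" "Whi \<subseteq> W" "Wlo \<inter> Whi = {}"
    unfolding Vlo_def Vhi_def Wlo_def Whi_def by auto
  have "E \<subseteq> V \<times> W"
    using G unfolding weighted_bipartite_def by blast
  with levels have "E \<subseteq> Vhi \<times> Whi \<union> Vlo \<times> Whi \<union> Vhi \<times> Wlo"
    unfolding Vlo_def Vhi_def Wlo_def Whi_def level_pattern_iff by fastforce
  note split = mu_theta_le_level_split[OF assms(1) G sets this]
  have "nonneg_padic_data p k k Vhi Whi (E \<inter> Vhi \<times> Whi)"
    "nonneg_padic_data p (k - 1) k Vlo Whi (E \<inter> Vlo \<times> Whi)"
    "nonneg_padic_data p k (k - 1) Vhi Wlo (E \<inter> Vhi \<times> Wlo)"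
    using k levels unfolding nonneg_padic_data_def Vlo_def Vhi_def Wlo_def Whi_def level_pattern_iff
    by auto
  with sets split that show thesis
    by blast
qed

lemma exists_large_level_subgraph:
  assumes "1 \<le> \<theta>" "0 < s" "s \<le> 2" and G: "weighted_bipartite \<mu> V W E" "E \<noteq> {}"
    and p: "prime p" and k: "1 \<le> k" and levels: "\<forall>(v,w)\<in>E. level_pattern k (ep p v) (ep p w)"
  obtains a b V1 W1 E1 where "V1 \<subseteq> V" "W1 \<subseteq> W" "E1 \<subseteq> E \<inter> V1 \<times> W1"
    "nonneg_padic_data p a b V1 W1 E1"
    "mu_theta \<theta> \<mu> V W E * loss_factor s p a b \<le> real p ^ nat \<bar>a - b\<bar> * mu_theta \<theta> \<mu> V1 W1 E1"
    "0 < mu_theta \<theta> \<mu> V1 W1 E1"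
proof -
  obtain Vlo Vhi Wlo Whi where sets: "Vlo \<subseteq> V" "Vhi \<subseteq> V" "Wlo \<subseteq> W" "Whi \<subseteq> W"
    and split: "mu_theta \<theta> \<mu> V W E \<le> mu_theta \<theta> \<mu> Vhi Whi (E \<inter> Vhi \<times> Whi)
      + mu_theta \<theta> \<mu> Vlo Whi (E \<inter> Vlo \<times> Whi) + mu_theta \<theta> \<mu> Vhi Wlo (E \<inter> Vhi \<times> Wlo)"
    and data: "nonneg_padic_data p k k Vhi Whi (E \<inter> Vhi \<times> Whi)"
      "nonneg_padic_data p (k - 1) k Vlo Whi (E \<inter> Vlo \<times> Whi)"
      "nonneg_padic_data p k (k - 1) Vhi Wlo (E \<inter> Vhi \<times> Wlo)"
    by (rule level_split[OF assms(1) G(1) k levels])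
  have "0 < mu_theta \<theta> \<mu> V W E"
    using mu_theta_pos[OF G] .
  from large_piece_cases[OF p assms(2,3) k less_imp_le[OF this] split]
  have "\<exists>a b V1 W1 E1. V1 \<subseteq> V \<and> W1 \<subseteq> W \<and> E1 \<subseteq> E \<inter> V1 \<times> W1 \<and> nonneg_padic_data p a b V1 W1 E1 \<and>
      mu_theta \<theta> \<mu> V W E * loss_factor s p a b \<le> real p ^ nat \<bar>a - b\<bar> * mu_theta \<theta> \<mu> V1 W1 E1"
  proof (elim disjE)
    assume "mu_theta \<theta> \<mu> V W E * loss_factor s p (k - 1) k
        \<le> real p * mu_theta \<theta> \<mu> Vlo Whi (E \<inter> Vlo \<times> Whi)"
    then have "mu_theta \<theta> \<mu> V W E * loss_factor s p (k - 1) k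
        \<le> real p ^ nat \<bar>k - 1 - k\<bar> * mu_theta \<theta> \<mu> Vlo Whi (E \<inter> Vlo \<times> Whi)"
      by simp
    with data(2) sets show ?thesis
      by blast
  next
    assume "mu_theta \<theta> \<mu> V W E * loss_factor s p k (k - 1)
        \<le> real p * mu_theta \<theta> \<mu> Vhi Wlo (E \<inter> Vhi \<times> Wlo)"
    then have "mu_theta \<theta> \<mu> V W E * loss_factor s p k (k - 1)
        \<le> real p ^ nat \<bar>k - (k - 1)\<bar> * mu_theta \<theta> \<mu> Vhi Wlo (E \<inter> Vhi \<times> Wlo)"
      by simp
    with data(3) sets show ?thesis
      by blast
  next
    assume "mu_theta \<theta> \<mu> V W E * loss_factor s p k k \<le> mu_theta \<theta> \<mu> Vhi Whi (E \<inter> Vhi \<times> Whi)"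
    then have "mu_theta \<theta> \<mu> V W E * loss_factor s p k k
        \<le> real p ^ nat \<bar>k - k\<bar> * mu_theta \<theta> \<mu> Vhi Whi (E \<inter> Vhi \<times> Whi)"
      by simp
    with data(1) sets show ?thesis
      by blast
  qed
  then obtain a b V1 W1 E1 where sub: "V1 \<subseteq> V" "W1 \<subseteq> W" "E1 \<subseteq> E \<inter> V1 \<times> W1"
    and data: "nonneg_padic_data p a b V1 W1 E1"
    and large: "mu_theta \<theta> \<mu> V W E * loss_factor s p a b \<le> real p ^ nat \<bar>a - b\<bar> * mu_theta \<theta> \<mu> V1 W1 E1"
    by blast
  have "0 < mu_theta \<theta> \<mu> V W E * loss_factor s p a b"
    using \<open>0 < mu_theta \<theta> \<mu> V W E\<close> loss_factor_pos[OF p assms(2)] by simp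
  with large have "0 < mu_theta \<theta> \<mu> V1 W1 E1"
    using prime_gt_0_nat[OF p] by (smt (verit) mult_nonneg_nonpos zero_le_power of_nat_0_le_iff)
  with sub data large that show thesis
    by blast
qed

section \<open>Refining the GCD graph\<close>

definition gcd_condition :: "rat set \<Rightarrow> rat set \<Rightarrow> (rat \<times> rat) set \<Rightarrow> nat \<Rightarrow> int \<Rightarrow> int \<Rightarrow> bool" where
  "gcd_condition V W E p a b \<longleftrightarrow> (\<forall>v\<in>V. \<forall>w\<in>W.
     int p ^ posp a dvd rnum v \<and> int p ^ posp b dvd rnum w \<and>
     int p ^ negp a dvd rden v \<and> int p ^ negp b dvd rden w \<and>
     ((v, w) \<in> E \<longrightarrow>
        multiplicity (int p) (gcd (rnum v) (rnum w)) = min (posp a) (posp b) \<and>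
        multiplicity (int p) (gcd (rden v) (rden w)) = min (negp a) (negp b)))"

lemma gcd_graph_iff:
  "gcd_graph \<mu> V W E P f g \<longleftrightarrow>
     weighted_bipartite \<mu> V W E \<and> finite P \<and> (\<forall>p\<in>P. prime p \<and> gcd_condition V W E p (f p) (g p))"
  unfolding gcd_graph_def gcd_condition_def by blast

lemma gcd_condition_mono:
  "gcd_condition V W E p a b \<Longrightarrow> A \<subseteq> V \<Longrightarrow> B \<subseteq> W \<Longrightarrow> C \<subseteq> E \<Longrightarrow> gcd_condition A B C p a b"
  unfolding gcd_condition_def by blast

lemma gcd_condition_if_nonneg_padic_data:
  assumes "prime p" "\<forall>x\<in>V \<union> W. 0 < x" "nonneg_padic_data p a b V W E"
  shows "gcd_condition V W E p a b"
  unfolding gcd_condition_def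
proof (intro ballI)
  fix v w assume v: "v \<in> V" and w: "w \<in> W"
  have a: "0 \<le> a" "a \<le> ep p v" and b: "0 \<le> b" "b \<le> ep p w"
    using assms(3) v w unfolding nonneg_padic_data_def by auto
  have edge: "multiplicity (int p) (gcd (rnum v) (rnum w)) = min (posp a) (posp b) \<and>
      multiplicity (int p) (gcd (rden v) (rden w)) = min (negp a) (negp b)" if "(v, w) \<in> E"
  proof -
    have "min (ep p v) (ep p w) = min a b"
      using assms(3) that unfolding nonneg_padic_data_def by auto
    then have "int (multiplicity (int p) (gcd (rnum v) (rnum w))) = min a b"
      using multiplicity_gcd_rnum[OF assms(1)] assms(2) v w a b by simp
    then show ?thesis
      using multiplicity_gcd_rden[OF assms(1)] a b unfolding posp_def negp_def by simp
  qed
  show "int p ^ posp a dvd rnum v \<and> int p ^ posp b dvd rnum w \<and>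
     int p ^ negp a dvd rden v \<and> int p ^ negp b dvd rden w \<and>
     ((v, w) \<in> E \<longrightarrow>
        multiplicity (int p) (gcd (rnum v) (rnum w)) = min (posp a) (posp b) \<and>
        multiplicity (int p) (gcd (rden v) (rden w)) = min (negp a) (negp b))"
    using pow_dvd_rnum_if_le_ep[OF assms(1)] a b edge unfolding posp_def negp_def by simp
qed

lemma denominator_exact_insert:
  assumes "prime p" "nonneg_padic_data p a b V W E"
  shows "denominator_exact V W (insert p P) (f(p := a)) (g(p := b)) P"
  unfolding denominator_exact_def
proof (rule ballI)
  fix q assume "q \<in> insert p P - P"
  then have "q = p"
    by blast
  have "0 \<le> a" "0 \<le> b" "\<forall>v\<in>V. a \<le> ep p v" "\<forall>w\<in>W. b \<le> ep p w"
    using assms(2) unfolding nonneg_padic_data_def by auto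
  then show "(\<forall>v\<in>V. multiplicity (int q) (rden v) = negp ((f(p := a)) q)) \<and>
    (\<forall>w\<in>W. multiplicity (int q) (rden w) = negp ((g(p := b)) q))"
    using ep_nonneg_multiplicity(1)[OF assms(1)] \<open>q = p\<close> unfolding negp_def by auto
qed

lemma gcd_graph_insert_prime:
  assumes G: "gcd_graph \<mu> V W E P f g" and sub: "A \<subseteq> V" "B \<subseteq> W" "C \<subseteq> E \<inter> A \<times> B"
    and p: "prime p" and data: "nonneg_padic_data p a b A B C"
  shows "gcd_graph \<mu> A B C (insert p P) (f(p := a)) (g(p := b))"
  unfolding gcd_graph_iff
proof (intro conjI)
  have wb: "weighted_bipartite \<mu> V W E" and "finite P"
    and old: "\<forall>q\<in>P. prime q \<and> gcd_condition V W E q (f q) (g q)"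
    using G unfolding gcd_graph_iff by auto
  show "weighted_bipartite \<mu> A B C"
    using weighted_bipartite_subgraph[OF wb sub(1,2)] sub(3) by blast
  show "finite (insert p P)"
    using \<open>finite P\<close> by simp
  show "\<forall>q\<in>insert p P. prime q \<and> gcd_condition A B C q ((f(p := a)) q) ((g(p := b)) q)"
  proof
    fix q assume "q \<in> insert p P"
    then consider "q = p" | "q \<in> P" "q \<noteq> p"
      by blast
    then show "prime q \<and> gcd_condition A B C q ((f(p := a)) q) ((g(p := b)) q)"
    proof cases
      case 1
      have "\<forall>x\<in>A \<union> B. 0 < x"
        using wb sub(1,2) unfolding weighted_bipartite_def by blast
      then show ?thesis
        using gcd_condition_if_nonneg_padic_data[OF p _ data] p 1 by simp
    next
      case 2
      then have "prime q" "gcd_condition V W E q (f q) (g q)"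
        using old by auto
      moreover have "C \<subseteq> E"
        using sub(3) by blast
      ultimately show ?thesis
        using gcd_condition_mono[OF _ sub(1,2)] 2(2) by simp
    qed
  qed
qed

lemma quality_insert:
  assumes "finite P" "p \<notin> P"
  shows "quality \<theta> \<mu> V W E (insert p P) (f(p := a)) (g(p := b))
    = real p ^ nat \<bar>a - b\<bar> * quality \<theta> \<mu> V W E P f g"
proof -
  have "(\<Prod>q\<in>P. real q ^ nat \<bar>(f(p := a)) q - (g(p := b)) q\<bar>) = (\<Prod>q\<in>P. real q ^ nat \<bar>f q - g q\<bar>)"
    using assms(2) by (intro prod.cong) auto
  then show ?thesis
    unfolding quality_def using assms by simp
qed

lemma quality_insert_ge:
  assumes "finite P" "p \<notin> P"
    and "mu_theta \<theta> \<mu> V W E * c \<le> real p ^ nat \<bar>a - b\<bar> * mu_theta \<theta> \<mu> A B C"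
  shows "quality \<theta> \<mu> V W E P f g * c \<le> quality \<theta> \<mu> A B C (insert p P) (f(p := a)) (g(p := b))"
proof -
  define Q where "Q = (\<Prod>q\<in>P. real q ^ nat \<bar>f q - g q\<bar>)"
  have "0 \<le> Q"
    unfolding Q_def by (intro prod_nonneg) auto
  have "quality \<theta> \<mu> V W E P f g * c = mu_theta \<theta> \<mu> V W E * c * Q"
    unfolding quality_def Q_def by simp
  also have "\<dots> \<le> real p ^ nat \<bar>a - b\<bar> * mu_theta \<theta> \<mu> A B C * Q"
    using assms(3) \<open>0 \<le> Q\<close> by (rule mult_right_mono)
  also have "\<dots> = quality \<theta> \<mu> A B C (insert p P) (f(p := a)) (g(p := b))"
    unfolding quality_insert[OF assms(1,2)] unfolding quality_def Q_def by simp
  finally show ?thesis .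
qed

lemma exists_maximal_subgraph_with_data:
  assumes "weighted_bipartite \<mu> V W E" "V1 \<subseteq> V" "W1 \<subseteq> W" "E1 \<subseteq> E \<inter> V1 \<times> W1"
    and "nonneg_padic_data p a b V1 W1 E1"
  obtains A B C where "A \<subseteq> V" "B \<subseteq> W" "C \<subseteq> E \<inter> A \<times> B" "nonneg_padic_data p a b A B C"
    "maximal \<theta> \<mu> A B C" "mu_theta \<theta> \<mu> V1 W1 E1 \<le> mu_theta \<theta> \<mu> A B C"
proof -
  have "finite V1" "finite W1" "E1 \<subseteq> V1 \<times> W1"
    using assms(1-4) finite_subset unfolding weighted_bipartite_def by auto
  then obtain A B C where ABC: "A \<subseteq> V1" "B \<subseteq> W1" "C \<subseteq> E1 \<inter> A \<times> B"
    and "maximal \<theta> \<mu> A B C" "mu_theta \<theta> \<mu> V1 W1 E1 \<le> mu_theta \<theta> \<mu> A B C"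
    by (rule exists_maximal_subgraph)
  moreover have "nonneg_padic_data p a b A B C"
    using nonneg_padic_data_mono[OF assms(5) ABC(1,2)] ABC(3) by blast
  moreover have "A \<subseteq> V" "B \<subseteq> W" "C \<subseteq> E \<inter> A \<times> B"
    using ABC assms(2-4) by auto
  ultimately show thesis
    using that by blast
qed

lemma exists_refinement_from_padic_data:
  assumes G: "gcd_graph \<mu> V W E P f g" and st: "structured E P" and p: "p \<in> Rplus E P"
    and sub: "V1 \<subseteq> V" "W1 \<subseteq> W" "E1 \<subseteq> E \<inter> V1 \<times> W1"
    and data: "nonneg_padic_data p a b V1 W1 E1"
    and large: "mu_theta \<theta> \<mu> V W E * loss_factor s p a b \<le> real p ^ nat \<bar>a - b\<bar> * mu_theta \<theta> \<mu> V1 W1 E1"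
    and pos: "0 < mu_theta \<theta> \<mu> V1 W1 E1"
  shows "\<exists>V' W' E' P' f' g'.
      gcd_subgraph \<mu> V' W' E' P' f' g' V W E P f g \<and>
      denominator_exact V' W' P' f' g' P \<and>
      E' \<noteq> {} \<and> maximal \<theta> \<mu> V' W' E' \<and>
      P \<subset> P' \<and> P' \<subseteq> P \<union> Rplus E P \<and>
      Rplus E' P' \<subset> Rplus E P \<and> Rminus E' P' \<subseteq> Rminus E P \<and>
      (\<forall>q\<in>P' - P. f' q \<ge> 0 \<and> g' q \<ge> 0) \<and>
      quality \<theta> \<mu> V' W' E' P' f' g' \<ge>
        quality \<theta> \<mu> V W E P f g * (\<Prod>q\<in>P' - P. loss_factor s q (f' q) (g' q))"
proof -
  have wb: "weighted_bipartite \<mu> V W E" and "finite P"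
    using G unfolding gcd_graph_iff by auto
  have "prime p" "p \<notin> P"
    using p unfolding Rplus_def Rset_def by auto
  obtain A B C where ABC: "A \<subseteq> V" "B \<subseteq> W" "C \<subseteq> E \<inter> A \<times> B" and data': "nonneg_padic_data p a b A B C"
    and max: "maximal \<theta> \<mu> A B C" and larger: "mu_theta \<theta> \<mu> V1 W1 E1 \<le> mu_theta \<theta> \<mu> A B C"
    by (rule exists_maximal_subgraph_with_data[OF wb sub data])
  define P' where "P' = insert p P"
  define f' where "f' = f(p := a)"
  define g' where "g' = g(p := b)"
  have "P \<subseteq> P'" "\<forall>q\<in>P. f' q = f q \<and> g' q = g q"
    unfolding P'_def f'_def g'_def using \<open>p \<notin> P\<close> by auto
  with gcd_graph_insert_prime[OF G ABC \<open>prime p\<close> data'] ABC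
  have subgraph: "gcd_subgraph \<mu> A B C P' f' g' V W E P f g"
    unfolding gcd_subgraph_def P'_def f'_def g'_def by blast
  have exact: "denominator_exact A B P' f' g' P"
    unfolding P'_def f'_def g'_def using denominator_exact_insert[OF \<open>prime p\<close> data'] .
  have "C \<noteq> {}"
    using pos larger by auto
  have "C \<subseteq> E"
    using ABC(3) by blast
  then have R: "Rplus C P' \<subset> Rplus E P" "Rminus C P' \<subseteq> Rminus E P"
    using Rplus_insert_psubset[OF st _ p] Rminus_mono[OF st _ \<open>P \<subseteq> P'\<close>] weighted_bipartite_edges_pos[OF wb]
    unfolding P'_def by simp_all
  have "real p ^ nat \<bar>a - b\<bar> * mu_theta \<theta> \<mu> V1 W1 E1 \<le> real p ^ nat \<bar>a - b\<bar> * mu_theta \<theta> \<mu> A B C"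
    using larger by (intro mult_left_mono) auto
  with large have "quality \<theta> \<mu> V W E P f g * loss_factor s p a b \<le> quality \<theta> \<mu> A B C P' f' g'"
    unfolding P'_def f'_def g'_def by (intro quality_insert_ge[OF \<open>finite P\<close> \<open>p \<notin> P\<close>]) linarith
  moreover have "P' - P = {p}"
    unfolding P'_def using \<open>p \<notin> P\<close> by auto
  ultimately have quality: "quality \<theta> \<mu> A B C P' f' g' \<ge>
      quality \<theta> \<mu> V W E P f g * (\<Prod>q\<in>P' - P. loss_factor s q (f' q) (g' q))"
    unfolding f'_def g'_def by simp
  have P': "P \<subset> P'" "P' \<subseteq> P \<union> Rplus E P" "\<forall>q\<in>P' - P. f' q \<ge> 0 \<and> g' q \<ge> 0"
    using \<open>p \<notin> P\<close> p data unfolding P'_def f'_def g'_def nonneg_padic_data_def by auto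
  show ?thesis
    using subgraph exact \<open>C \<noteq> {}\<close> max P' R quality by blast
qed

theorem proposition7p17:
  fixes \<tau> M :: real
    and \<mu> :: "rat \<Rightarrow> real" and V W :: "rat set" and E :: "(rat \<times> rat) set"
    and P :: "nat set" and f g :: "nat \<Rightarrow> int"
  assumes "0 < \<tau>" and "\<tau> < 1/100" and "M \<ge> 2"
    and "gcd_graph \<mu> V W E P f g"
    and "E \<noteq> {}"
    and "structured E P"
    and "Rset E P \<subseteq> {p. real p > C6 \<tau> M}"
    and "Rplus E P \<noteq> {}"
  shows "\<exists>V' W' E' P' f' g'.
      gcd_subgraph \<mu> V' W' E' P' f' g' V W E P f g \<and>
      denominator_exact V' W' P' f' g' P \<and>
      E' \<noteq> {} \<and> maximal (2 + \<tau>) \<mu> V' W' E' \<and>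
      P \<subset> P' \<and> P' \<subseteq> P \<union> Rplus E P \<and>
      Rplus E' P' \<subset> Rplus E P \<and> Rminus E' P' \<subseteq> Rminus E P \<and>
      (\<forall>p\<in>P' - P. f' p \<ge> 0 \<and> g' p \<ge> 0) \<and>
      quality (2 + \<tau>) \<mu> V' W' E' P' f' g' \<ge>
        quality (2 + \<tau>) \<mu> V W E P f g *
        (\<Prod>p\<in>P' - P. (1 - (if f' p = g' p \<and> g' p > 0 then 1 else 0) / real p)^2 *
                       (1 - 1 / real p powr (1 + \<tau> / 4)))"
proof -
  have wb: "weighted_bipartite \<mu> V W E"
    using assms(4) unfolding gcd_graph_iff by blast
  obtain p where p: "p \<in> Rplus E P"
    using assms(8) by blast
  then have "prime p"
    unfolding Rplus_def Rset_def by blast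
  obtain k where k: "1 \<le> k" and levels: "\<forall>(v,w)\<in>E. level_pattern k (ep p v) (ep p w)"
    by (rule Rplus_level[OF assms(6) p weighted_bipartite_edges_pos[OF wb]])
  have exponents: "1 \<le> 2 + \<tau>" "0 < 1 + \<tau> / 4" "1 + \<tau> / 4 \<le> 2"
    using assms(1,2) by auto
  obtain a b V1 W1 E1 where "V1 \<subseteq> V" "W1 \<subseteq> W" "E1 \<subseteq> E \<inter> V1 \<times> W1"
    "nonneg_padic_data p a b V1 W1 E1"
    "mu_theta (2 + \<tau>) \<mu> V W E * loss_factor (1 + \<tau> / 4) p a b
       \<le> real p ^ nat \<bar>a - b\<bar> * mu_theta (2 + \<tau>) \<mu> V1 W1 E1"
    "0 < mu_theta (2 + \<tau>) \<mu> V1 W1 E1"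
    by (rule exists_large_level_subgraph[OF exponents wb assms(5) \<open>prime p\<close> k levels])
  from exists_refinement_from_padic_data[OF assms(4,6) p this]
  show ?thesis
    unfolding loss_factor_def .
qed

end
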